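(* Let $\Lambda_2,\Lambda_3,\Lambda_4\in\mathbb C$, $\Lambda_4\neq0$, and let $\mathcal V^{[2]}$, $v_\lambda$, $\widetilde L_n$, $\widetilde{\mathbf L}_\mu$, $\deg_\delta$ be as in the context. Let $\delta=1$, or $\delta=2$ under the additional assumption $\Lambda_3=0$. Then for all partitions $\lambda,\mu$: (a) if $j\ge1$ and $\widetilde L_{2+j}v_\lambda\ne0$, then $\deg_\delta\big(\widetilde L_{2+j}v_\lambda\big)\le\deg_\delta v_\lambda-\deg_\delta L_{2-j}$; (b) if $\deg_\delta v_\mu>\deg_\delta v_\lambda$, then $\widetilde{\mathbf L}_\mu v_\lambda=0$.
   Context: $\mathcal V^{[2]}$ is the Virasoro Whittaker module generated by $|J\rangle$ with $L_n|J\rangle=\Lambda_n|J\rangle$ ($n=2,3,4$), $L_n|J\rangle=0$ ($n>4$). Basis $v_\lambda=\mathbf L_{-\lambda}|J\rangle$, $\mathbf L_{-\lambda}=L_{-\lambda_1+2}\cdots L_{-\lambda_\ell+2}$ for partitions $\lambda=(\lambda_1\ge\dots\ge\lambda_\ell\ge1)$, $v_\emptyset=|J\rangle$. $\widetilde L_n=L_n-\Lambda_n$ for $n=3,4$, $\widetilde L_n=L_n$ for $n>4$; $\widetilde{\mathbf L}_\mu=\widetilde L_{\mu_1+2}\cdots\widetilde L_{\mu_m+2}$. Degrees: $\deg_\delta L_{-k}=k$ ($k>0$), $\deg_\delta L_0=\delta$, $\deg_\delta L_1=1$, so that for $\lambda=(\cdots3^{n_3}2^{n_2}1^{n_1})$,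 $\deg_\delta v_\lambda=n_1+\delta n_2+\sum_{k>2}n_k(k-2)$; the degree of a nonzero vector $v=\sum c_\lambda v_\lambda$ is the maximum of $\deg_\delta v_\lambda$ over $\lambda$ with $c_\lambda\neq0$. *)

theory Defs
  imports Complex_Main
begin

text \<open>Vectors of the Whittaker module are coordinate functions on the basis
  v_lambda, i.e. functions from partitions to complex numbers with finite support.\<close>

definition is_partition :: "nat list \<Rightarrow> bool" where
  "is_partition lam \<longleftrightarrow> sorted_wrt (\<ge>) lam \<and> (\<forall>k\<in>set lam. 1 \<le> k)"

type_synonym vec = "nat list \<Rightarrow> complex"

definition fin_vec :: "vec \<Rightarrow> bool" where
  "fin_vec x \<longleftrightarrow> finite {mu. x mu \<noteq> 0} \<and> (\<forall>mu. x mu \<noteq> 0 \<longrightarrow> is_partition mu)"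

text \<open>basis vector v_lambda; v [] is the Whittaker vector J\<close>
definition bvec :: "nat list \<Rightarrow> vec" where
  "bvec lam = (\<lambda>mu. if mu = lam then 1 else 0)"

text \<open>These conditions determine L uniquely.\<close>
definition whittaker_module ::
  "complex \<Rightarrow> complex \<Rightarrow> complex \<Rightarrow> complex \<Rightarrow> (int \<Rightarrow> vec \<Rightarrow> vec) \<Rightarrow> bool" where
  "whittaker_module c La2 La3 La4 L \<longleftrightarrow>
     (\<forall>n x. fin_vec x \<longrightarrow> fin_vec (L n x)) \<and>
     (\<forall>n x y. fin_vec x \<longrightarrow> fin_vec y \<longrightarrow> L n (\<lambda>mu. x mu + y mu) = (\<lambda>mu. L n x mu + L n y mu)) \<and>
     (\<forall>n a x. fin_vec x \<longrightarrow> L n (\<lambda>mu. a * x mu) = (\<lambda>mu. a * L n x mu)) \<and>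
     (\<forall>m n x. fin_vec x \<longrightarrow>
        (\<lambda>mu. L m (L n x) mu - L n (L m x) mu) =
        (\<lambda>mu. of_int (m - n) * L (m + n) x mu
              + (if m + n = 0 then c / 12 * (of_int m ^ 3 - of_int m) * x mu else 0))) \<and>
     L 2 (bvec []) = (\<lambda>mu. La2 * bvec [] mu) \<and>
     L 3 (bvec []) = (\<lambda>mu. La3 * bvec [] mu) \<and>
     L 4 (bvec []) = (\<lambda>mu. La4 * bvec [] mu) \<and>
     (\<forall>n > 4. L n (bvec []) = (\<lambda>mu. 0)) \<and>
     (\<forall>lam. is_partition lam \<longrightarrow> foldr (\<lambda>k x. L (2 - int k) x) lam (bvec []) = bvec lam)"

definition Lt :: "complex \<Rightarrow> complex \<Rightarrow> (int \<Rightarrow> vec \<Rightarrow> vec) \<Rightarrow> int \<Rightarrow> vec \<Rightarrow> vec" where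
  "Lt La3 La4 L n x =
     (if n = 3 then (\<lambda>mu. L 3 x mu - La3 * x mu)
      else if n = 4 then (\<lambda>mu. L 4 x mu - La4 * x mu)
      else L n x)"

definition Lt_prod :: "complex \<Rightarrow> complex \<Rightarrow> (int \<Rightarrow> vec \<Rightarrow> vec) \<Rightarrow> nat list \<Rightarrow> vec \<Rightarrow> vec" where
  "Lt_prod La3 La4 L mu x = foldr (\<lambda>k y. Lt La3 La4 L (int k + 2) y) mu x"

text \<open>deg_delta of a part k (= deg_delta of L_{2-k}): 1 for k=1, delta for k=2, k-2 for k>2\<close>
definition degpart :: "nat \<Rightarrow> nat \<Rightarrow> int" where
  "degpart d k = (if k = 1 then 1 else if k = 2 then int d else int k - 2)"

definition degp :: "nat \<Rightarrow> nat list \<Rightarrow> int" where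
  "degp d lam = sum_list (map (degpart d) lam)"

definition vdeg :: "nat \<Rightarrow> vec \<Rightarrow> int" where
  "vdeg d x = Max (degp d ` {mu. x mu \<noteq> 0})"

end

(*
  Let F_D be the span of the v_lam with deg v_lam <= D, and let deg L_n be deg L_{2-k} = degpart k
  for n = 2 - k <= 1, and -degpart j for n = 2 + j >= 3 (0 for n = 2).  Then L_n - Lambda_n maps
  F_D into F_{D + deg L_n} for every n; part (a) is the case n = 2 + j, and part (b) iterates it
  down to a piece F_D with D < 0, which is zero.

  The bound is proved on v_lam = L_a v_lam' by moving L_n past L_a with
  [L_n, L_a] = (n - a) L_{n+a} + central term: for n <= 1 (when a < n) by induction on
  (deg v_lam + deg L_n, n), for n >= 2 by induction on lam.  The new terms land in the right
  piece because deg L_{n+a} <= deg L_n + deg L_a, which needs delta <= 2, and because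
  deg L_n + deg L_a >= 0 whenever Lambda_{n+a} or the central term is nonzero; the only
  exception, (n, a) = (4, -1) with delta = 2, is excluded by Lambda_3 = 0.
*)

theory Submission
  imports Defs "HOL-Library.Product_Lexorder"
begin

definition deg_le :: "nat \<Rightarrow> int \<Rightarrow> vec \<Rightarrow> bool" where
  "deg_le d D x \<longleftrightarrow> fin_vec x \<and> (\<forall>mu. x mu \<noteq> 0 \<longrightarrow> degp d mu \<le> D)"

lemma is_partition_Cons:
  "is_partition (k # mu) \<longleftrightarrow> is_partition mu \<and> 1 \<le> k \<and> (\<forall>x\<in>set mu. x \<le> k)"
  unfolding is_partition_def by auto

lemma degp_Cons: "degp d (k # mu) = degpart d k + degp d mu"
  by (simp add: degp_def)

lemma degp_nonneg: "is_partition mu \<Longrightarrow> 0 \<le> degp d mu"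
  by (induction mu) (auto simp: is_partition_Cons degp_Cons degpart_def degp_def)

lemma fin_vec_zero: "fin_vec (\<lambda>mu. 0)"
  by (simp add: fin_vec_def)

lemma fin_vec_bvec: "is_partition lam \<Longrightarrow> fin_vec (bvec lam)"
  by (simp add: fin_vec_def bvec_def)

lemma fin_vec_supp_mono: "fin_vec x \<Longrightarrow> (\<And>mu. y mu \<noteq> 0 \<Longrightarrow> x mu \<noteq> 0) \<Longrightarrow> fin_vec y"
  unfolding fin_vec_def by (metis (mono_tags, lifting) finite_subset mem_Collect_eq subsetI)

lemma fin_vec_add: "fin_vec x \<Longrightarrow> fin_vec y \<Longrightarrow> fin_vec (\<lambda>mu. x mu + y mu)"
proof -
  assume "fin_vec x" "fin_vec y"
  moreover have "{mu. x mu + y mu \<noteq> 0} \<subseteq> {mu. x mu \<noteq> 0} \<union> {mu. y mu \<noteq> 0}" by auto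
  ultimately show ?thesis by (auto simp: fin_vec_def intro: finite_subset)
qed

lemma fin_vec_scale: "fin_vec x \<Longrightarrow> fin_vec (\<lambda>mu. a * x mu)"
  by (erule fin_vec_supp_mono) simp

lemma deg_le_zero: "deg_le d D (\<lambda>mu. 0)"
  by (simp add: deg_le_def fin_vec_zero)

lemma deg_le_supp_mono: "deg_le d D x \<Longrightarrow> (\<And>mu. y mu \<noteq> 0 \<Longrightarrow> x mu \<noteq> 0) \<Longrightarrow> deg_le d D y"
  unfolding deg_le_def using fin_vec_supp_mono by blast

lemma deg_le_add: "deg_le d D x \<Longrightarrow> deg_le d D y \<Longrightarrow> deg_le d D (\<lambda>mu. x mu + y mu)"
  unfolding deg_le_def by (auto intro: fin_vec_add) (metis add.right_neutral)

lemma deg_le_scale: "deg_le d D x \<Longrightarrow> deg_le d D (\<lambda>mu. a * x mu)"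
  by (erule deg_le_supp_mono) simp

lemma deg_le_mono: "deg_le d D x \<Longrightarrow> D \<le> D' \<Longrightarrow> deg_le d D' x"
  unfolding deg_le_def by (meson order_trans)

lemma deg_le_bvec: "is_partition lam \<Longrightarrow> degp d lam \<le> D \<Longrightarrow> deg_le d D (bvec lam)"
  using fin_vec_bvec[of lam] by (simp add: deg_le_def bvec_def)

lemma deg_le_scale_bvec:
  "is_partition lam \<Longrightarrow> (a \<noteq> 0 \<Longrightarrow> degp d lam \<le> D) \<Longrightarrow> deg_le d D (\<lambda>mu. a * bvec lam mu)"
  by (cases "a = 0") (simp_all add: deg_le_zero deg_le_scale deg_le_bvec)

lemma deg_le_negative: "deg_le d D x \<Longrightarrow> D < 0 \<Longrightarrow> x = (\<lambda>mu. 0)"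
proof (rule ext, rule ccontr)
  fix mu assume "deg_le d D x" "D < 0" "x mu \<noteq> 0"
  then have "is_partition mu" "degp d mu \<le> D" by (auto simp: deg_le_def fin_vec_def)
  then show False using degp_nonneg[of mu d] \<open>D < 0\<close> by simp
qed

lemma vdeg_le: "deg_le d D x \<Longrightarrow> x \<noteq> (\<lambda>mu. 0) \<Longrightarrow> vdeg d x \<le> D"
  unfolding deg_le_def fin_vec_def vdeg_def by (simp add: Max_le_iff fun_eq_iff)

lemma deg_le_induct [consumes 1, case_names zero add]:
  assumes "deg_le d D x"
    and zero: "P (\<lambda>mu. 0)"
    and add: "\<And>x a mu. deg_le d D x \<Longrightarrow> P x \<Longrightarrow> is_partition mu \<Longrightarrow> degp d mu \<le> D \<Longrightarrow>
      P (\<lambda>nu. x nu + a * bvec mu nu)"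
  shows "P x"
proof -
  have "\<forall>x. {mu. x mu \<noteq> 0} = S \<longrightarrow> deg_le d D x \<longrightarrow> P x" if "finite S" for S
    using that
  proof (induction S rule: finite_induct)
    case empty
    then show ?case using zero by (simp add: fun_eq_iff)
  next
    case (insert mu S)
    show ?case
    proof (intro allI impI)
      fix x assume supp: "{nu. x nu \<noteq> 0} = insert mu S" and x: "deg_le d D x"
      define y where "y = x(mu := 0)"
      have supp_y: "{nu. y nu \<noteq> 0} = S" using supp insert.hyps(2) by (auto simp: y_def)
      have y: "deg_le d D y" by (rule deg_le_supp_mono[OF x]) (simp add: y_def split: if_splits)
      have mu: "is_partition mu" "degp d mu \<le> D"
        using x supp by (auto simp: deg_le_def fin_vec_def)
      have "x = (\<lambda>nu. y nu + x mu * bvec mu nu)" by (auto simp: y_def bvec_def)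
      then show "P x" using add[OF y _ mu] insert.IH supp_y y by metis
    qed
  qed
  then show ?thesis using assms(1) by (auto simp: deg_le_def fin_vec_def)
qed

definition vec_linear :: "(vec \<Rightarrow> vec) \<Rightarrow> bool" where
  "vec_linear T \<longleftrightarrow> (\<forall>x. fin_vec x \<longrightarrow> fin_vec (T x)) \<and>
     (\<forall>x y. fin_vec x \<longrightarrow> fin_vec y \<longrightarrow> T (\<lambda>mu. x mu + y mu) = (\<lambda>mu. T x mu + T y mu)) \<and>
     (\<forall>a x. fin_vec x \<longrightarrow> T (\<lambda>mu. a * x mu) = (\<lambda>mu. a * T x mu))"

lemma vec_linear_fin_vec: "vec_linear T \<Longrightarrow> fin_vec x \<Longrightarrow> fin_vec (T x)"
  unfolding vec_linear_def by blast

lemma vec_linear_add_scale: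
  assumes "vec_linear T" "fin_vec x" "fin_vec y"
  shows "T (\<lambda>mu. x mu + a * y mu) = (\<lambda>mu. T x mu + a * T y mu)"
  using assms fin_vec_scale unfolding vec_linear_def by metis

lemma vec_linear_zero: "vec_linear T \<Longrightarrow> T (\<lambda>mu. 0) = (\<lambda>mu. 0)"
  using vec_linear_add_scale[of T "\<lambda>mu. 0" "\<lambda>mu. 0" "-1"] fin_vec_zero by simp

lemma vec_linear_minus_scale:
  assumes T: "vec_linear T"
  shows "vec_linear (\<lambda>x mu. T x mu - a * x mu)"
  unfolding vec_linear_def
proof (intro conjI allI impI)
  fix x assume "fin_vec x"
  then show "fin_vec (\<lambda>mu. T x mu - a * x mu)"
    using fin_vec_add[OF vec_linear_fin_vec[OF T] fin_vec_scale, of x x "- a"] by simp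
next
  fix x y assume "fin_vec x" "fin_vec y"
  then show "(\<lambda>mu. T (\<lambda>mu. x mu + y mu) mu - a * (x mu + y mu)) =
      (\<lambda>mu. T x mu - a * x mu + (T y mu - a * y mu))"
    using vec_linear_add_scale[OF T, of x y 1] by (simp add: algebra_simps)
next
  fix b x assume "fin_vec x"
  then show "(\<lambda>mu. T (\<lambda>mu. b * x mu) mu - a * (b * x mu)) = (\<lambda>mu. b * (T x mu - a * x mu))"
    using vec_linear_add_scale[OF T fin_vec_zero, of x b] vec_linear_zero[OF T]
    by (simp add: algebra_simps)
qed

lemma vec_linear_deg_le:
  assumes T: "vec_linear T" and x: "deg_le d D x"
    and basis: "\<And>mu. is_partition mu \<Longrightarrow> degp d mu \<le> D \<Longrightarrow> deg_le d (degp d mu + e) (T (bvec mu))"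
  shows "deg_le d (D + e) (T x)"
  using x
proof (induction rule: deg_le_induct)
  case zero
  then show ?case using vec_linear_zero[OF T] deg_le_zero by simp
next
  case (add x a mu)
  have "T (\<lambda>nu. x nu + a * bvec mu nu) = (\<lambda>nu. T x nu + a * T (bvec mu) nu)"
    using vec_linear_add_scale[OF T] add.hyps fin_vec_bvec by (simp add: deg_le_def)
  moreover have "deg_le d (D + e) (T (bvec mu))"
    using deg_le_mono[OF basis] add.hyps by simp
  ultimately show ?case using add.IH by (simp add: deg_le_add deg_le_scale)
qed

text \<open>For n \<ge> 2 this is minus the amount by which L_n - Lambda_n lowers the degree.\<close>
definition deg_L :: "nat \<Rightarrow> int \<Rightarrow> int" where
  "deg_L d n = (if n \<le> 1 then degpart d (nat (2 - n)) else if n = 2 then 0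
     else - degpart d (nat (n - 2)))"

lemma deg_L_explicit:
  "deg_L d n = (if n < 0 then - n else if n = 0 then int d else if n = 1 then 1
     else if n = 2 then 0 else if n = 3 then -1 else if n = 4 then - int d else 4 - n)"
  by (simp add: deg_L_def degpart_def nat_eq_iff)

lemma deg_L_raise: "1 \<le> k \<Longrightarrow> deg_L d (2 - int k) = degpart d k"
  by (simp add: deg_L_def)

lemma deg_L_lower: "1 \<le> j \<Longrightarrow> deg_L d (2 + int j) = - degpart d j"
  by (simp add: deg_L_def)

lemma deg_L_ge_one: "1 \<le> d \<Longrightarrow> n \<le> 1 \<Longrightarrow> 1 \<le> deg_L d n"
  by (simp add: deg_L_explicit)

lemma deg_L_ge_neg: "1 \<le> d \<Longrightarrow> n \<le> 1 \<Longrightarrow> - n \<le> deg_L d n"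
  by (simp add: deg_L_explicit)

lemma deg_L_add_le:
  assumes "d = 1 \<or> d = 2" "a \<le> 1" "a < n"
  shows "deg_L d (n + a) \<le> deg_L d n + deg_L d a"
  using assms unfolding deg_L_explicit by auto

lemma deg_L_add_less:
  assumes "1 \<le> d" "0 \<le> a" "a < n" "n \<le> 1"
  shows "deg_L d (n + a) < deg_L d n + deg_L d a"
  using assms unfolding deg_L_explicit by auto

lemma deg_L_add_nonneg:
  assumes "d = 1 \<or> d = 2 \<and> n + a \<noteq> 3" "a \<le> 1" "a < n" "n + a \<le> 4"
  shows "0 \<le> deg_L d n + deg_L d a"
  using assms unfolding deg_L_explicit by auto

locale whittaker =
  fixes c La2 La3 La4 :: complex and L :: "int \<Rightarrow> vec \<Rightarrow> vec"
  assumes module: "whittaker_module c La2 La3 La4 L"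
begin

definition Lambda :: "int \<Rightarrow> complex" where
  "Lambda n = (if n = 2 then La2 else if n = 3 then La3 else if n = 4 then La4 else 0)"

definition Lsub :: "int \<Rightarrow> vec \<Rightarrow> vec" where
  "Lsub n x = (\<lambda>mu. L n x mu - Lambda n * x mu)"

lemma vec_linear_L: "vec_linear (L n)"
  using module unfolding whittaker_module_def vec_linear_def by blast

lemma vec_linear_Lsub: "vec_linear (Lsub n)"
  unfolding Lsub_def[abs_def] by (rule vec_linear_minus_scale[OF vec_linear_L])

lemma Lsub_eq_L: "n \<le> 1 \<Longrightarrow> Lsub n = L n"
  by (simp add: Lsub_def Lambda_def fun_eq_iff)

lemma Lt_eq_Lsub: "3 \<le> n \<Longrightarrow> Lt La3 La4 L n = Lsub n"
  by (auto simp: Lt_def Lsub_def Lambda_def fun_eq_iff)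

lemma Lambda_nonzero: "Lambda n \<noteq> 0 \<Longrightarrow> 2 \<le> n \<and> n \<le> 4 \<and> (n = 3 \<longrightarrow> La3 \<noteq> 0)"
  by (auto simp: Lambda_def split: if_splits)

lemma Lsub_whittaker_vector: "2 \<le> n \<Longrightarrow> Lsub n (bvec []) = (\<lambda>mu. 0)"
  using module unfolding whittaker_module_def by (auto simp: Lsub_def Lambda_def)

lemma L_bvec:
  assumes "is_partition (k # mu)"
  shows "L (2 - int k) (bvec mu) = bvec (k # mu)"
proof -
  have fold: "foldr (\<lambda>k x. L (2 - int k) x) lam (bvec []) = bvec lam" if "is_partition lam" for lam
    using module that unfolding whittaker_module_def by blast
  have "is_partition mu" using assms by (simp add: is_partition_Cons)
  then show ?thesis using fold[OF assms] fold[of mu] by simp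
qed

lemma deg_le_L_bvec_prepend:
  assumes "is_partition mu" "n \<le> 1" "\<forall>k\<in>set mu. int k \<le> 2 - n"
  shows "deg_le d (degp d mu + deg_L d n) (L n (bvec mu))"
proof -
  define k where "k = nat (2 - n)"
  have k: "int k = 2 - n" "1 \<le> k" using assms(2) by (auto simp: k_def)
  then have kmu: "is_partition (k # mu)" using assms(1,3) by (auto simp: is_partition_Cons)
  then have "L n (bvec mu) = bvec (k # mu)" using L_bvec k(1) by force
  moreover have "degp d (k # mu) = degp d mu + deg_L d n"
    using k deg_L_raise[OF k(2), of d] by (simp add: degp_Cons)
  ultimately show ?thesis using deg_le_bvec[OF kmu] by simp
qed

lemma L_commutator:
  assumes "fin_vec x"
  shows "L n (L a x) = (\<lambda>mu. L a (L n x) mu + of_int (n - a) * L (n + a) x mu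
    + (if n + a = 0 then c / 12 * (of_int n ^ 3 - of_int n) else 0) * x mu)"
proof -
  have "(\<lambda>mu. L n (L a x) mu - L a (L n x) mu) = (\<lambda>mu. of_int (n - a) * L (n + a) x mu
      + (if n + a = 0 then c / 12 * (of_int n ^ 3 - of_int n) * x mu else 0))"
    using module assms unfolding whittaker_module_def by blast
  then show ?thesis by (simp add: fun_eq_iff algebra_simps)
qed

lemma Lsub_commutator:
  assumes "fin_vec x"
  shows "Lsub n (L a x) = (\<lambda>mu. L a (Lsub n x) mu + of_int (n - a) * L (n + a) x mu
    + (if n + a = 0 then c / 12 * (of_int n ^ 3 - of_int n) else 0) * x mu)"
  using L_commutator[OF assms, of n a]
    vec_linear_add_scale[OF vec_linear_L vec_linear_fin_vec[OF vec_linear_L assms] assms,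
      of a n "- Lambda n"]
  by (simp add: Lsub_def fun_eq_iff algebra_simps)

end

locale graded_whittaker = whittaker +
  fixes d :: nat
  assumes admissible_degree: "d = 1 \<or> (d = 2 \<and> La3 = 0)"
begin

lemma degree_one_or_two: "d = 1 \<or> d = 2"
  using admissible_degree by blast

lemma deg_le_Lsub_Cons:
  assumes kmu: "is_partition (k # mu)" and a: "a = 2 - int k" "a < n"
    and head: "deg_le d (degp d (k # mu) + deg_L d n) (L a (Lsub n (bvec mu)))"
    and tail: "deg_le d (degp d mu + deg_L d (n + a)) (Lsub (n + a) (bvec mu))"
  shows "deg_le d (degp d (k # mu) + deg_L d n) (Lsub n (bvec (k # mu)))"
proof -
  let ?D = "degp d (k # mu) + deg_L d n"
  define C where "C = (if n + a = 0 then c / 12 * (of_int n ^ 3 - of_int n) else 0)"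
  have mu: "is_partition mu" and a1: "a \<le> 1" and deg: "?D = degp d mu + deg_L d n + deg_L d a"
    using kmu a by (auto simp: is_partition_Cons degp_Cons deg_L_raise)
  have expand: "Lsub n (bvec (k # mu)) = (\<lambda>nu. L a (Lsub n (bvec mu)) nu
      + of_int (n - a) * (Lsub (n + a) (bvec mu) nu + Lambda (n + a) * bvec mu nu)
      + C * bvec mu nu)"
    using Lsub_commutator[OF fin_vec_bvec[OF mu], of n a] L_bvec[OF kmu] a
    by (simp add: C_def Lsub_def)
  have tail': "deg_le d ?D (Lsub (n + a) (bvec mu))"
    using deg_le_mono[OF tail] deg_L_add_le[OF degree_one_or_two a1 a(2)] deg by simp
  have eigen: "deg_le d ?D (\<lambda>nu. Lambda (n + a) * bvec mu nu)"
  proof (rule deg_le_scale_bvec[OF mu])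
    assume "Lambda (n + a) \<noteq> 0"
    then have "0 \<le> deg_L d n + deg_L d a"
      using Lambda_nonzero admissible_degree a1 a(2) by (intro deg_L_add_nonneg) auto
    then show "degp d mu \<le> ?D" using deg by simp
  qed
  have central: "deg_le d ?D (\<lambda>nu. C * bvec mu nu)"
  proof (rule deg_le_scale_bvec[OF mu])
    assume "C \<noteq> 0"
    then have "0 \<le> deg_L d n + deg_L d a"
      using degree_one_or_two a1 a(2) by (intro deg_L_add_nonneg) (auto simp: C_def split: if_splits)
    then show "degp d mu \<le> ?D" using deg by simp
  qed
  show ?thesis
    unfolding expand by (intro deg_le_add deg_le_scale head tail' eigen central)
qed

lemma deg_le_L_raising_bvec:
  "is_partition mu \<Longrightarrow> n \<le> 1 \<Longrightarrow> deg_le d (degp d mu + deg_L d n) (L n (bvec mu))"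
proof (induction "(nat (degp d mu + deg_L d n), nat (n + degp d mu + deg_L d n))"
    arbitrary: n mu rule: less_induct)
  case less
  let ?T = "degp d mu + deg_L d n"
  have d1: "1 \<le> d" using degree_one_or_two by auto
  \<comment> \<open>the commutator step lowers deg v_mu + deg L_n, or keeps it and lowers n\<close>
  have IH: "deg_le d (degp d nu + deg_L d m) (L m (bvec nu))"
    if nu: "is_partition nu" "m \<le> 1"
      and smaller: "degp d nu + deg_L d m < ?T \<or> degp d nu + deg_L d m = ?T \<and> m < n" for m nu
  proof (rule less.hyps[OF _ nu])
    have "0 \<le> degp d nu + deg_L d m" "0 \<le> m + degp d nu + deg_L d m"
      "0 \<le> n + degp d mu + deg_L d n"
      using degp_nonneg[OF nu(1)] degp_nonneg[OF less.prems(1)] nu(2) less.prems(2)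
        deg_L_ge_one[OF d1] deg_L_ge_neg[OF d1] by (smt (verit))+
    then show "(nat (degp d nu + deg_L d m), nat (m + degp d nu + deg_L d m))
        < (nat (degp d mu + deg_L d n), nat (n + degp d mu + deg_L d n))"
      using smaller by (auto simp: less_prod_def)
  qed
  show ?case
  proof (cases "\<forall>k\<in>set mu. int k \<le> 2 - n")
    case True
    then show ?thesis using deg_le_L_bvec_prepend less.prems by blast
  next
    case False
    then obtain k mu' where mu: "mu = k # mu'" and kn: "2 - int k < n"
      using less.prems(1) by (cases mu) (auto simp: is_partition_Cons)
    define a where "a = 2 - int k"
    have mu': "is_partition mu'" and k1: "1 \<le> k"
      using less.prems(1) mu by (auto simp: is_partition_Cons)
    have a: "a \<le> 1" "a < n" using k1 kn by (auto simp: a_def)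
    have deg: "?T = degp d mu' + deg_L d n + deg_L d a"
      using mu k1 by (simp add: a_def degp_Cons deg_L_raise)
    have ga: "1 \<le> deg_L d a" using deg_L_ge_one[OF d1 a(1)] .
    have "deg_le d (degp d mu' + deg_L d n) (L n (bvec mu'))"
      by (rule IH[OF mu' less.prems(2)]) (use deg ga in linarith)
    then have "deg_le d (degp d mu' + deg_L d n + deg_L d a) (L a (L n (bvec mu')))"
    proof (rule vec_linear_deg_le[OF vec_linear_L])
      fix nu assume "is_partition nu" "degp d nu \<le> degp d mu' + deg_L d n"
      then show "deg_le d (degp d nu + deg_L d a) (L a (bvec nu))"
        using IH[of nu a] a deg by linarith
    qed
    then have head: "deg_le d (degp d mu + deg_L d n) (L a (Lsub n (bvec mu')))"
      using deg Lsub_eq_L[OF less.prems(2)] by (simp add: algebra_simps)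
    have na: "n + a \<le> 1" using a less.prems(2) by linarith
    have "deg_L d (n + a) \<le> deg_L d n + deg_L d a"
      using deg_L_add_le[OF degree_one_or_two a] .
    moreover have "0 \<le> a \<Longrightarrow> deg_L d (n + a) < deg_L d n + deg_L d a"
      using deg_L_add_less[OF d1 _ a(2) less.prems(2)] .
    ultimately have "deg_le d (degp d mu' + deg_L d (n + a)) (L (n + a) (bvec mu'))"
      using IH[OF mu' na] deg by fastforce
    then have tail: "deg_le d (degp d mu' + deg_L d (n + a)) (Lsub (n + a) (bvec mu'))"
      using Lsub_eq_L[OF na] by simp
    show ?thesis
      using deg_le_Lsub_Cons[OF less.prems(1)[unfolded mu] a_def a(2) head[unfolded mu] tail]
        Lsub_eq_L[OF less.prems(2)] mu by simp
  qed
qed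

lemma deg_le_L_raising: "deg_le d D x \<Longrightarrow> n \<le> 1 \<Longrightarrow> deg_le d (D + deg_L d n) (L n x)"
  by (rule vec_linear_deg_le[OF vec_linear_L]) (simp_all add: deg_le_L_raising_bvec)

lemma deg_le_Lsub_bvec:
  "is_partition lam \<Longrightarrow> deg_le d (degp d lam + deg_L d n) (Lsub n (bvec lam))"
proof (induction lam arbitrary: n)
  case Nil
  then show ?case
    using deg_le_L_raising_bvec Lsub_eq_L Lsub_whittaker_vector deg_le_zero
    by (cases "n \<le> 1") simp_all
next
  case (Cons k lam)
  show ?case
  proof (cases "n \<le> 1")
    case True
    then show ?thesis using deg_le_L_raising_bvec[OF Cons.prems True] Lsub_eq_L[OF True] by simp
  next
    case False
    define a where "a = 2 - int k"
    have lam: "is_partition lam" and k1: "1 \<le> k" using Cons.prems by (auto simp: is_partition_Cons)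
    have a: "a \<le> 1" "a < n" using k1 False by (auto simp: a_def)
    have "deg_le d (degp d lam + deg_L d n + deg_L d a) (L a (Lsub n (bvec lam)))"
      using deg_le_L_raising[OF Cons.IH[OF lam] a(1)] .
    then have head: "deg_le d (degp d (k # lam) + deg_L d n) (L a (Lsub n (bvec lam)))"
      using k1 by (simp add: a_def degp_Cons deg_L_raise algebra_simps)
    show ?thesis by (rule deg_le_Lsub_Cons[OF Cons.prems a_def a(2) head Cons.IH[OF lam]])
  qed
qed

lemma deg_le_Lsub: "deg_le d D x \<Longrightarrow> deg_le d (D + deg_L d n) (Lsub n x)"
  by (rule vec_linear_deg_le[OF vec_linear_Lsub]) (simp_all add: deg_le_Lsub_bvec)

lemma deg_le_Lt_prod:
  "deg_le d D x \<Longrightarrow> \<forall>k\<in>set mu. 1 \<le> k \<Longrightarrow> deg_le d (D - degp d mu) (Lt_prod La3 La4 L mu x)"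
proof (induction mu)
  case Nil
  then show ?case by (simp add: Lt_prod_def degp_def)
next
  case (Cons k mu)
  have k: "1 \<le> k" using Cons.prems by simp
  have "Lt_prod La3 La4 L (k # mu) x = Lsub (2 + int k) (Lt_prod La3 La4 L mu x)"
    using Lt_eq_Lsub[of "2 + int k"] k by (simp add: Lt_prod_def add.commute)
  moreover have "deg_L d (2 + int k) = - degpart d k" using k by (rule deg_L_lower)
  ultimately show ?case
    using deg_le_Lsub[OF Cons.IH, of "2 + int k"] Cons.prems by (simp add: degp_Cons algebra_simps)
qed

end

theorem lemmaA8:
  fixes c La2 La3 La4 :: complex and L :: "int \<Rightarrow> vec \<Rightarrow> vec" and d :: nat
  assumes "whittaker_module c La2 La3 La4 L"
    and "La4 \<noteq> 0"
    and "d = 1 \<or> (d = 2 \<and> La3 = 0)"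
  shows "(\<forall>lam j. is_partition lam \<longrightarrow> 1 \<le> j \<longrightarrow>
            Lt La3 La4 L (2 + int j) (bvec lam) \<noteq> (\<lambda>mu. 0) \<longrightarrow>
            vdeg d (Lt La3 La4 L (2 + int j) (bvec lam)) \<le> degp d lam - degpart d j)
       \<and> (\<forall>lam mu. is_partition lam \<longrightarrow> is_partition mu \<longrightarrow>
            degp d mu > degp d lam \<longrightarrow> Lt_prod La3 La4 L mu (bvec lam) = (\<lambda>nu. 0))"
proof -
  interpret graded_whittaker c La2 La3 La4 L d
    by unfold_locales (use assms in auto)
  have lowering: "vdeg d (Lt La3 La4 L (2 + int j) (bvec lam)) \<le> degp d lam - degpart d j"
    if "is_partition lam" "1 \<le> j" "Lt La3 La4 L (2 + int j) (bvec lam) \<noteq> (\<lambda>mu. 0)" for lam j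
  proof -
    have "deg_le d (degp d lam - degpart d j) (Lt La3 La4 L (2 + int j) (bvec lam))"
      using deg_le_Lsub_bvec[OF that(1), of "2 + int j"] Lt_eq_Lsub[of "2 + int j"] that(2)
      by (simp add: deg_L_lower)
    then show ?thesis using vdeg_le that(3) by blast
  qed
  have annihilation: "Lt_prod La3 La4 L mu (bvec lam) = (\<lambda>nu. 0)"
    if "is_partition lam" "is_partition mu" "degp d mu > degp d lam" for lam mu
  proof -
    have "deg_le d (degp d lam - degp d mu) (Lt_prod La3 La4 L mu (bvec lam))"
      using that(2) by (intro deg_le_Lt_prod deg_le_bvec[OF that(1)]) (auto simp: is_partition_def)
    then show ?thesis using deg_le_negative that(3) by simp
  qed
  show ?thesis using lowering annihilation by blast
qed

end
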